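(* Let $N,\ell,k$ be integers with $1\le\ell<k\le N$, and let $\phi_k:S_{N,k}\to S_{N,k-\ell}$ be the truncation $\langle\pi(1),\dots,\pi(k)\rangle\mapsto\langle\pi(1),\dots,\pi(k-\ell)\rangle$. For every $\pi\in S_{N,k}$, the number of distinct subpermutations $\phi_k(\sigma)$, as $\sigma$ ranges over the neighbours of $\pi$ in $\mathcal U_{N,\ell,k}$, is at most $(2\ell+1)^k$.
   Context: $[N]=\{1,\dots,N\}$, $S_N$ is the set of permutations of $[N]$. For $\pi,\sigma\in S_N$, $\delta(\pi,\sigma)=\max_{i\in[N]}|\pi^{-1}(i)-\sigma^{-1}(i)|$. For $1\le k\le N$, $S_{N,k}$ is the set of injective maps $[k]\to[N]$; a permutation $\pi'\in S_N$ extends $\pi\in S_{N,k}$ if $\pi'(i)=\pi(i)$ for all $i\in[k]$. For $\pi,\sigma\in S_{N,k}$, $\delta(\pi,\sigma)=\min\{\delta(\pi',\sigma'):\pi',\sigma'\in S_N$ extending $\pi,\sigma$ respectively$\}$. The $k$-restricted uncertainty graph $\mathcal U_{N,\ell,k}$ has vertex set $S_{N,k}$, with $\pi\sim\sigma$ iff $\pi(1)\ne\sigma(1)$ and $\delta(\pi,\sigma)\le\ell$. *)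

theory Defs
  imports Main
begin

text \<open>Encoding: a permutation of [N] (or an injective map [k] -> [N]) is the list
  [pi(1), ..., pi(k)] of its values; so pi(i) = xs ! (i - 1).\<close>

definition perms :: "nat \<Rightarrow> nat list set" where
  "perms N = {xs. length xs = N \<and> distinct xs \<and> set xs = {1..N}}"

definition partial_perms :: "nat \<Rightarrow> nat \<Rightarrow> nat list set" where
  "partial_perms N k = {xs. length xs = k \<and> distinct xs \<and> set xs \<subseteq> {1..N}}"

definition pinv :: "nat list \<Rightarrow> nat \<Rightarrow> nat" where
  "pinv xs i = (THE j. 1 \<le> j \<and> j \<le> length xs \<and> xs ! (j - 1) = i)"

definition perm_delta :: "nat \<Rightarrow> nat list \<Rightarrow> nat list \<Rightarrow> nat" where
  "perm_delta N p s = Max ((\<lambda>i. nat \<bar>int (pinv p i) - int (pinv s i)\<bar>) ` {1..N})"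

definition extends :: "nat list \<Rightarrow> nat list \<Rightarrow> bool" where
  "extends p' p \<longleftrightarrow> take (length p) p' = p"

definition partial_delta :: "nat \<Rightarrow> nat list \<Rightarrow> nat list \<Rightarrow> nat" where
  "partial_delta N p s = Min {perm_delta N p' s' | p' s'.
      p' \<in> perms N \<and> s' \<in> perms N \<and> extends p' p \<and> extends s' s}"

definition uadj :: "nat \<Rightarrow> nat \<Rightarrow> nat \<Rightarrow> nat list \<Rightarrow> nat list \<Rightarrow> bool" where
  "uadj N l k p s \<longleftrightarrow> p \<in> partial_perms N k \<and> s \<in> partial_perms N k
      \<and> p ! 0 \<noteq> s ! 0 \<and> partial_delta N p s \<le> l"

definition trunc :: "nat \<Rightarrow> nat \<Rightarrow> nat list \<Rightarrow> nat list" where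
  "trunc k l p = take (k - l) p"

end

theory Submission
  imports Defs
begin

(* Let s be a neighbour of p in U_{N,l,k}.  Since the partial
   distance is a minimum over a finite nonempty set, it is attained by extensions
   p', s' in S_N with delta(p', s') <= l.  Hence every value s(i) sits in p' at a
   position j with |i - j| <= l; for i <= k - l this forces j <= k, so s(i) = p(j)
   is an entry of p itself.  Thus the truncation of s is a "window list" of p: a
   list of length k - l whose i-th entry is p(j) for some j within distance l of i.
   Encoding such a list by its offsets j - i + l in {0..2l} shows that there are
   at most (2l+1)^(k-l) <= (2l+1)^k of them. *)

lemma pinv_nth:
  assumes "distinct xs" "j < length xs"
  shows "pinv xs (xs ! j) = Suc j"
  unfolding pinv_def
proof (rule the_equality)
  show "1 \<le> Suc j \<and> Suc j \<le> length xs \<and> xs ! (Suc j - 1) = xs ! j"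
    using assms(2) by auto
next
  fix j' assume h: "1 \<le> j' \<and> j' \<le> length xs \<and> xs ! (j' - 1) = xs ! j"
  then have "j' - 1 = j" using assms nth_eq_iff_index_eq[of xs "j' - 1" j] by auto
  with h show "j' = Suc j" by auto
qed

text \<open>Every injective map [k] -> [N] extends to a permutation of [N]: append the
  missing values in increasing order.\<close>
lemma partial_perm_extends:
  assumes "p \<in> partial_perms N k"
  shows "\<exists>p'. p' \<in> perms N \<and> extends p' p"
proof -
  define r where "r = sorted_list_of_set ({1..N} - set p)"
  have p: "length p = k" "distinct p" "set p \<subseteq> {1..N}"
    using assms by (auto simp: partial_perms_def)
  have r: "set r = {1..N} - set p" "distinct r" by (auto simp: r_def)
  have "k \<le> N" using p card_mono[of "{1..N}" "set p"] by (simp add: distinct_card)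
  have "length r = card ({1..N} - set p)" using r distinct_card by metis
  also have "\<dots> = N - k" using p by (simp add: card_Diff_subset distinct_card)
  finally have "length r = N - k" .
  then have "p @ r \<in> perms N" using p r \<open>k \<le> N\<close> by (auto simp: perms_def)
  moreover have "extends (p @ r) p" by (simp add: extends_def)
  ultimately show ?thesis by blast
qed

text \<open>S_N is finite; needed so that the minimum defining the partial distance exists.\<close>
lemma finite_perms: "finite (perms N)"
proof -
  have "perms N \<subseteq> {xs. set xs \<subseteq> {1..N} \<and> length xs = N}" by (auto simp: perms_def)
  then show ?thesis using finite_lists_length_eq[of "{1..N}" N] finite_subset by auto
qed

lemma partial_delta_attained:
  assumes "p \<in> partial_perms N k" "s \<in> partial_perms N k"
  shows "\<exists>p' s'. p' \<in> perms N \<and> s' \<in> perms N \<and> extends p' p \<and> extends s' s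
                 \<and> perm_delta N p' s' = partial_delta N p s"
proof -
  define S where "S = {perm_delta N p' s' | p' s'.
      p' \<in> perms N \<and> s' \<in> perms N \<and> extends p' p \<and> extends s' s}"
  have "S \<subseteq> (\<lambda>(a, b). perm_delta N a b) ` (perms N \<times> perms N)" by (auto simp: S_def)
  then have "finite S" using finite_perms finite_subset by blast
  moreover have "S \<noteq> {}"
    using partial_perm_extends[OF assms(1)] partial_perm_extends[OF assms(2)]
    by (auto simp: S_def)
  ultimately have "Min S \<in> S" by simp
  then obtain p' s' where "p' \<in> perms N" "s' \<in> perms N" "extends p' p" "extends s' s"
    and "Min S = perm_delta N p' s'"
    by (auto simp: S_def)
  then show ?thesis unfolding partial_delta_def S_def[symmetric] by metis
qed

lemma perm_delta_window:
  assumes "p' \<in> perms N" "s' \<in> perms N" "perm_delta N p' s' \<le> l" "i < N"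
  shows "\<exists>j<N. p' ! j = s' ! i \<and> j \<le> i + l \<and> i \<le> j + l"
proof -
  have p': "length p' = N" "distinct p'" "set p' = {1..N}"
   and s': "length s' = N" "distinct s'" "set s' = {1..N}"
    using assms(1,2) by (auto simp: perms_def)
  define v where "v = s' ! i"
  have v: "v \<in> {1..N}" using s' assms(4) by (metis v_def nth_mem)
  then obtain j where j: "j < N" "p' ! j = v" using p' by (metis in_set_conv_nth)
  have "pinv p' v = Suc j" using pinv_nth[of p' j] j p' by simp
  moreover have "pinv s' v = Suc i" using pinv_nth[of s' i] s' assms(4) by (simp add: v_def)
  moreover have "nat \<bar>int (pinv p' v) - int (pinv s' v)\<bar> \<le> perm_delta N p' s'"
    unfolding perm_delta_def using v by (intro Max_ge) auto
  ultimately have "nat \<bar>int (Suc j) - int (Suc i)\<bar> \<le> l" using assms(3) by simp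
  then show ?thesis using j by (auto simp: v_def)
qed

lemma neighbour_entry_near:
  assumes "uadj N l k p s" "i < k - l"
  shows "\<exists>j. s ! i = p ! j \<and> j \<le> i + l \<and> i \<le> j + l"
proof -
  have pp: "p \<in> partial_perms N k" "s \<in> partial_perms N k"
   and le: "partial_delta N p s \<le> l"
    using assms(1) by (auto simp: uadj_def)
  obtain p' s' where ext: "p' \<in> perms N" "s' \<in> perms N" "extends p' p" "extends s' s"
    and dl: "perm_delta N p' s' \<le> l"
    using partial_delta_attained[OF pp] le by auto
  have len: "length p = k" "length s = k" "length p' = N"
    using pp ext(1) by (auto simp: partial_perms_def perms_def)
  have "k \<le> N" using ext len by (auto simp: extends_def dest: arg_cong[of _ _ length])
  have ik: "i < k" using assms(2) by simp
  have "s' ! i = s ! i" using ext(4) len ik by (metis extends_def nth_take)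
  then obtain j where j: "p' ! j = s ! i" "j \<le> i + l" "i \<le> j + l"
    using perm_delta_window[OF ext(1,2) dl, of i] ik \<open>k \<le> N\<close> by auto
  have "j < k" using j(2) assms(2) by simp
  then have "p ! j = p' ! j" using ext(3) len by (metis extends_def nth_take)
  then show ?thesis using j by metis
qed

definition window_lists :: "'a list \<Rightarrow> nat \<Rightarrow> nat \<Rightarrow> 'a list set" where
  "window_lists p l m = {t. length t = m \<and> (\<forall>i<m. \<exists>j. t ! i = p ! j \<and> j \<le> i + l \<and> i \<le> j + l)}"

lemma window_lists_offsets:
  "window_lists p l m \<subseteq> (\<lambda>ds. map (\<lambda>i. p ! (i + ds ! i - l)) [0..<m])
                           ` {ds. set ds \<subseteq> {0..<2*l+1} \<and> length ds = m}"
proof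
  fix t assume "t \<in> window_lists p l m"
  then have len: "length t = m"
    and near: "\<And>i. i < m \<Longrightarrow> \<exists>j. t ! i = p ! j \<and> j \<le> i + l \<and> i \<le> j + l"
    by (auto simp: window_lists_def)
  define J where "J i = (SOME j. t ! i = p ! j \<and> j \<le> i + l \<and> i \<le> j + l)" for i
  have J: "t ! i = p ! J i \<and> J i \<le> i + l \<and> i \<le> J i + l" if "i < m" for i
    unfolding J_def using near[OF that] by (rule someI_ex)
  define ds where "ds = map (\<lambda>i. J i + l - i) [0..<m]"
  have "J i + l - i < 2 * l + 1" if "i < m" for i using J[OF that] by linarith
  then have "ds \<in> {ds. set ds \<subseteq> {0..<2*l+1} \<and> length ds = m}" by (auto simp: ds_def)
  moreover have "map (\<lambda>i. p ! (i + ds ! i - l)) [0..<m] = t"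
  proof (rule nth_equalityI)
    fix i assume "i < length (map (\<lambda>i. p ! (i + ds ! i - l)) [0..<m])"
    then have i: "i < m" by simp
    then have "i + ds ! i - l = J i" using J[OF i] by (simp add: ds_def)
    then show "map (\<lambda>i. p ! (i + ds ! i - l)) [0..<m] ! i = t ! i" using J[OF i] i by simp
  qed (simp add: len)
  ultimately show "t \<in> (\<lambda>ds. map (\<lambda>i. p ! (i + ds ! i - l)) [0..<m])
                           ` {ds. set ds \<subseteq> {0..<2*l+1} \<and> length ds = m}"
    by blast
qed

lemma window_lists_finite_card:
  "finite (window_lists p l m) \<and> card (window_lists p l m) \<le> (2 * l + 1) ^ m"
proof -
  let ?D = "{ds. set ds \<subseteq> {0..<2*l+1} \<and> length ds = m}"
  let ?f = "\<lambda>ds. map (\<lambda>i. p ! (i + ds ! i - l)) [0..<m]"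
  have fin: "finite ?D" using finite_lists_length_eq by blast
  then have fin_image: "finite (?f ` ?D)" by (rule finite_imageI)
  have "card (window_lists p l m) \<le> card (?f ` ?D)"
    by (rule card_mono[OF fin_image window_lists_offsets])
  also have "\<dots> \<le> card ?D" using fin by (rule card_image_le)
  also have "\<dots> = (2 * l + 1) ^ m" using card_lists_length_eq[of "{0..<2*l+1}" m] by simp
  finally show ?thesis using finite_subset[OF window_lists_offsets fin_image] by blast
qed

theorem mainTheorem7:
  fixes N l k :: nat
  assumes "1 \<le> l" and "l < k" and "k \<le> N"
    and "p \<in> partial_perms N k"
  shows "card (trunc k l ` {s. uadj N l k p s}) \<le> (2 * l + 1) ^ k"
proof -
  have sub: "trunc k l ` {s. uadj N l k p s} \<subseteq> window_lists p l (k - l)"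
  proof
    fix t assume "t \<in> trunc k l ` {s. uadj N l k p s}"
    then obtain s where s: "uadj N l k p s" and t: "t = take (k - l) s"
      by (auto simp: trunc_def)
    have "length s = k" using s by (auto simp: uadj_def partial_perms_def)
    then show "t \<in> window_lists p l (k - l)"
      using neighbour_entry_near[OF s] by (auto simp: window_lists_def t)
  qed
  have "card (trunc k l ` {s. uadj N l k p s}) \<le> card (window_lists p l (k - l))"
    using sub window_lists_finite_card card_mono by blast
  also have "\<dots> \<le> (2 * l + 1) ^ (k - l)" using window_lists_finite_card by blast
  also have "\<dots> \<le> (2 * l + 1) ^ k" by (rule power_increasing) auto
  finally show ?thesis .
qed

end
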